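(* Let $(b,w)\in\mathbb{N}^2$. Then there exists a partition $\lambda$ such that $(b(\lambda),w(\lambda))=(b,w)$ if and only if there exist integers $k,l\in\mathbb{N}=\{0,1,2,\dots\}$ such that either \[(b,w)=\big((k+1)^2+l,\;k(k+1)+l\big)\quad\text{or}\quad (b,w)=\big(k^2+l,\;k(k+1)+l\big).\]
   Context: A partition is a finite nonincreasing sequence $\lambda=(\lambda_1,\lambda_2,\dots,\lambda_r)$ of positive integers (the empty sequence is the unique partition of $0$); set $\lambda_i=0$ for $i<1$ and $i>r$. Its Ferrers graph consists of unit squares, with row $i$ (rows indexed from $i=0$) containing $\lambda_{i+1}$ squares, left-justified, columns indexed from $0$. Colour the square in row $r$ and column $c$ black if $r+c$ is even and white if $r+c$ is odd. Then $b(\lambda)$ is the number of black squares and $w(\lambda)$ the number of white squares; explicitly $b(\lambda)=\sum_{j}\lceil \lambda_{2j+1}/2\rceil+\sum_j\lfloor \lambda_{2j}/2\rfloor$ and $w(\lambda)=\sum_{j}\lfloor \lambda_{2j+1}/2\rfloor+\sum_j\lceil \lambda_{2j}/2\rceil$. *)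

theory Defs
  imports Main
begin

definition is_partition :: "nat list \<Rightarrow> bool" where
  "is_partition lam \<longleftrightarrow> sorted_wrt (\<ge>) lam \<and> (\<forall>x\<in>set lam. 0 < x)"

definition ferrers :: "nat list \<Rightarrow> (nat \<times> nat) set" where
  "ferrers lam = {(r, c). r < length lam \<and> c < lam ! r}"

definition black :: "nat list \<Rightarrow> nat" where
  "black lam = card {(r, c) \<in> ferrers lam. even (r + c)}"

definition white :: "nat list \<Rightarrow> nat" where
  "white lam = card {(r, c) \<in> ferrers lam. odd (r + c)}"

end

theory Submission
  imports Defs
begin

text \<open>Deleting the first row, of length x, swaps the two colours in the remaining rows, so the
  excess b - w of a partition becomes x mod 2 minus the excess of the rest. For a nonincreasing
  partition this keeps the excess between -(x div 2) and (x + 1) div 2, and with that the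
  invariant (b - w)^2 \<le> b passes from the rest to the whole partition. That inequality is
  exactly the arithmetic condition of the theorem. Conversely, the staircases (m, m-1, ..., 1)
  attain the pairs with l = 0, and appending 2l rows of length 1 adds l to both
  counts.\<close>

lemma finite_ferrers: "finite (ferrers lam)"
proof -
  have "ferrers lam = (SIGMA r:{..<length lam}. {..<lam ! r})"
    by (auto simp: ferrers_def)
  then show ?thesis by simp
qed

lemma card_ferrers_Cons:
  "card {(r, c) \<in> ferrers (x # lam). P (r + c)} =
   card {c. c < x \<and> P c} + card {(r, c) \<in> ferrers lam. P (Suc (r + c))}"
proof -
  let ?first = "(\<lambda>c. (0::nat, c)) ` {c. c < x \<and> P c}"
  let ?rest = "(\<lambda>(r, c). (Suc r, c)) ` {(r, c) \<in> ferrers lam. P (Suc (r + c))}"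
  have split: "{(r, c) \<in> ferrers (x # lam). P (r + c)} = ?first \<union> ?rest"
  proof (rule set_eqI)
    fix p :: "nat \<times> nat"
    obtain r c where p: "p = (r, c)" by fastforce
    show "p \<in> {(r, c) \<in> ferrers (x # lam). P (r + c)} \<longleftrightarrow> p \<in> ?first \<union> ?rest"
      unfolding p by (cases r) (auto simp: ferrers_def image_iff)
  qed
  have "finite ?rest"
    using finite_ferrers[of lam] by (auto intro: finite_subset)
  moreover have "?first \<inter> ?rest = {}" by auto
  moreover have "card ?first = card {c. c < x \<and> P c}"
    by (rule card_image) (auto simp: inj_on_def)
  moreover have "card ?rest = card {(r, c) \<in> ferrers lam. P (Suc (r + c))}"
    by (rule card_image) (auto simp: inj_on_def)
  ultimately show ?thesis
    unfolding split by (simp add: card_Un_disjoint)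
qed

lemma card_even_odd_less:
  "card {c::nat. c < x \<and> even c} = (x + 1) div 2 \<and> card {c::nat. c < x \<and> odd c} = x div 2"
proof (induction x)
  case 0
  then show ?case by simp
next
  case (Suc x)
  have "{c. c < Suc x \<and> even c} = (if even x then insert x else id) {c. c < x \<and> even c}"
    and "{c. c < Suc x \<and> odd c} = (if odd x then insert x else id) {c. c < x \<and> odd c}"
    by (auto simp: less_Suc_eq)
  with Suc show ?case by (auto elim!: evenE oddE)
qed

lemma black_Nil [simp]: "black [] = 0"
  and white_Nil [simp]: "white [] = 0"
  by (simp_all add: black_def white_def ferrers_def)

lemma black_Cons: "black (x # lam) = (x + 1) div 2 + white lam"
  unfolding black_def white_def card_ferrers_Cons[of x lam even]
  using card_even_odd_less[of x] by simp

lemma white_Cons: "white (x # lam) = x div 2 + black lam"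
  unfolding black_def white_def card_ferrers_Cons[of x lam odd]
  using card_even_odd_less[of x] by simp

lemma black_append:
  "black (lam @ mu) = black lam + (if even (length lam) then black mu else white mu)"
  and white_append:
  "white (lam @ mu) = white lam + (if even (length lam) then white mu else black mu)"
  by (induction lam) (simp_all add: black_Cons white_Cons)

definition excess :: "nat list \<Rightarrow> int" where
  "excess lam = int (black lam) - int (white lam)"

lemma excess_Cons: "excess (x # lam) = int (x mod 2) - excess lam"
proof -
  have "(x + 1) div 2 = x div 2 + x mod 2" by presburger
  then show ?thesis by (simp add: excess_def black_Cons white_Cons)
qed

lemma excess_bounds:
  assumes "sorted_wrt (\<ge>) lam" "\<forall>x\<in>set lam. x \<le> h"
  shows "- int (h div 2) \<le> excess lam \<and> excess lam \<le> int ((h + 1) div 2)"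
  using assms
proof (induction lam arbitrary: h)
  case Nil
  then show ?case by (simp add: excess_def)
next
  case (Cons x lam)
  then have "- int (x div 2) \<le> excess lam" "excess lam \<le> int ((x + 1) div 2)"
    by auto
  moreover have "(x + 1) div 2 = x div 2 + x mod 2" by presburger
  moreover have "x div 2 \<le> h div 2" "(x + 1) div 2 \<le> (h + 1) div 2"
    using Cons.prems by (simp_all add: div_le_mono)
  ultimately show ?case
    unfolding excess_Cons by linarith
qed

lemma excess_square_le_black:
  assumes "sorted_wrt (\<ge>) lam"
  shows "excess lam ^ 2 \<le> int (black lam)"
  using assms
proof (induction lam)
  case Nil
  then show ?case by (simp add: excess_def)
next
  case (Cons x lam)
  define e where "e = excess lam"
  have IH: "e ^ 2 \<le> int (black lam)"
    using Cons by (simp add: e_def)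
  have bounds: "- int (x div 2) \<le> e" "e \<le> int ((x + 1) div 2)"
    using excess_bounds[of lam x] Cons.prems by (simp_all add: e_def)
  have black: "int (black (x # lam)) = int ((x + 1) div 2) + int (black lam) - e"
    by (simp add: black_Cons e_def excess_def)
  show ?case
  proof (cases "even x")
    case True
    then have "(x + 1) div 2 = x div 2" by presburger
    with True IH bounds show ?thesis
      unfolding excess_Cons black by (simp add: e_def [symmetric])
  next
    case False
    then have "(x + 1) div 2 = x div 2 + 1" "x mod 2 = 1" by presburger+
    moreover have "(1 - e) ^ 2 = 1 - 2 * e + e ^ 2"
      by (simp add: power2_eq_square algebra_simps)
    ultimately show ?thesis
      using IH bounds unfolding excess_Cons black by (simp add: e_def [symmetric])
  qed
qed

lemma families_if_diff_square_le:
  fixes b w :: nat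
  assumes "(int b - int w) ^ 2 \<le> int b"
  shows "\<exists>k l :: nat. (b = (k + 1)^2 + l \<and> w = k * (k + 1) + l) \<or>
                      (b = k^2 + l \<and> w = k * (k + 1) + l)"
proof (cases "w < b")
  case True
  define k where "k = b - w - 1"
  have b: "b = w + k + 1" using True by (simp add: k_def)
  with assms have "int (k + 1) ^ 2 \<le> int w + int k + 1" by simp
  then have "k * (k + 1) \<le> w"
    by (simp add: power2_eq_square algebra_simps flip: of_nat_mult of_nat_add)
  with b have "b = (k + 1)^2 + (w - k * (k + 1)) \<and> w = k * (k + 1) + (w - k * (k + 1))"
    by (simp add: power2_eq_square algebra_simps)
  then show ?thesis by blast
next
  case False
  define k where "k = w - b"
  have w: "w = b + k" using False by (simp add: k_def)
  with assms have "int (k ^ 2) \<le> int b" by simp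
  then have "k ^ 2 \<le> b" by linarith
  with w have "b = k^2 + (b - k^2) \<and> w = k * (k + 1) + (b - k^2)"
    by (simp add: power2_eq_square algebra_simps)
  then show ?thesis by blast
qed

fun staircase :: "nat \<Rightarrow> nat list" where
  "staircase 0 = []"
| "staircase (Suc m) = Suc m # staircase m"

lemma set_staircase: "set (staircase m) = {1..m}"
  by (induction m) auto

lemma sorted_staircase: "sorted_wrt (\<ge>) (staircase m)"
  by (induction m) (auto simp: set_staircase)

lemma length_staircase: "length (staircase m) = m"
  by (induction m) auto

lemma black_white_staircase:
  "black (staircase m) = ((m + 1) div 2) ^ 2 \<and> white (staircase m) = (m div 2) * (m div 2 + 1)"
proof (induction m)
  case 0
  then show ?case by simp
next
  case (Suc m)
  then show ?case
    by (cases "even m") (auto simp: black_Cons white_Cons power2_eq_square elim!: evenE oddE)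
qed

lemma black_white_column: "black (replicate (2 * l) 1) = l \<and> white (replicate (2 * l) 1) = l"
  by (induction l) (simp_all add: black_Cons white_Cons)

lemma is_partition_staircase_column: "is_partition (staircase m @ replicate n 1)"
proof -
  have "\<forall>x\<in>set (staircase m). 1 \<le> x" by (simp add: set_staircase)
  moreover have "sorted_wrt (\<ge>) (replicate n (1::nat))"
    by (induction n) auto
  ultimately show ?thesis
    using sorted_staircase[of m]
    by (auto simp: is_partition_def sorted_wrt_append set_staircase)
qed

lemma black_white_staircase_column:
  "black (staircase m @ replicate (2 * l) 1) = ((m + 1) div 2) ^ 2 + l"
  "white (staircase m @ replicate (2 * l) 1) = (m div 2) * (m div 2 + 1) + l"
  using black_white_staircase[of m] black_white_column[of l]
  by (simp_all add: black_append white_append length_staircase)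

theorem theoremB:
  fixes b w :: nat
  shows "(\<exists>lam. is_partition lam \<and> black lam = b \<and> white lam = w) \<longleftrightarrow>
         (\<exists>k l :: nat. (b = (k + 1)^2 + l \<and> w = k * (k + 1) + l) \<or>
                       (b = k^2 + l \<and> w = k * (k + 1) + l))"
proof
  assume "\<exists>lam. is_partition lam \<and> black lam = b \<and> white lam = w"
  then obtain lam where "is_partition lam" "black lam = b" "white lam = w" by blast
  then have "(int b - int w) ^ 2 \<le> int b"
    using excess_square_le_black[of lam] by (simp add: is_partition_def excess_def)
  then show "\<exists>k l :: nat. (b = (k + 1)^2 + l \<and> w = k * (k + 1) + l) \<or>
                         (b = k^2 + l \<and> w = k * (k + 1) + l)"
    by (rule families_if_diff_square_le)
next
  assume "\<exists>k l :: nat. (b = (k + 1)^2 + l \<and> w = k * (k + 1) + l) \<or>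
                       (b = k^2 + l \<and> w = k * (k + 1) + l)"
  then obtain k l m where "m = 2 * k + 1 \<or> m = 2 * k"
    and "b = ((m + 1) div 2) ^ 2 + l" "w = (m div 2) * (m div 2 + 1) + l"
    by fastforce
  then show "\<exists>lam. is_partition lam \<and> black lam = b \<and> white lam = w"
    using is_partition_staircase_column black_white_staircase_column by blast
qed

end
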